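(* Under the covariate-shift assumptions of the context, let $V$ be a fixed score function and $\alpha\in(0,1)$. Let $\tilde\alpha=A(Z_1,\ldots,Z_n,X_{n+1})\in[0,1]$, where $A$ is a fixed deterministic rule (invariant under permutations of its first $n$ arguments) such that for every input, with $\bar v^*:=Q(\tilde\alpha;\hat{\mathcal F})$, $v^*_{i1}:=Q(\tilde\alpha;\sum_{j=1}^np^H_{i,j}\delta_{V_j}+p^H_{i,n+1}\delta_{\bar v^*})$ and $v^*_{i2}:=Q(\tilde\alpha;\sum_{j=1}^np^H_{i,j}\delta_{V_j}+p^H_{i,n+1}\delta_0)$, either $\bar v^*=\infty$ or $$\text{(G2}^w\text{)}\qquad \sum_{i=1}^n\frac{w(X_i)}{\sum_{j=1}^{n+1}w(X_j)}\mathbb 1\{V_i\le v^*_{i1}\}\ge\alpha\quad\text{and}\quad \sum_{i=1}^n\frac{w(X_i)}{\sum_{j=1}^{n+1}w(X_j)}\mathbb 1\{V_i\le v^*_{i2}\}+\frac{w(X_{n+1})}{\sum_{j=1}^{n+1}w(X_j)}\ge\alpha.$$ Then $\mathbb P\{V_{n+1}\le Q(\tilde\alpha;\hat{\mathcal F})\}\ge\alpha$. In particular, with $\widehat C(X_{n+1})=\{y:V(X_{n+1},y)\le Q(\tilde\alpha;\hat{\mathcal F})\}$, $\mathbb P\{Y_{n+1}\in\widehat C(X_{n+1})\}\ge\alpha$.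
   Context: Covariate-shift assumptions: $Z_1,\ldots,Z_{n+1}$ are independent, $Z_i=(X_i,Y_i)\sim P=P_X\times P_{Y|X}$ for $i\le n$ and $Z_{n+1}\sim\tilde P=\tilde P_X\times P_{Y|X}$; $\tilde P_X$ is absolutely continuous with respect to $P_X$ with known density ratio $w=d\tilde P_X/dP_X$. $X=\{X_1,\ldots,X_{n+1}\}$ (unordered). A localizer is a function $H(x_1,x_2,X)\in[0,1]$ of $x_1,x_2\in\mathbb R^p$ and of the unordered set $X$, with $H(x,x,X)=1$; $H_{i,j}=H(X_i,X_j,X)$, $p^H_{i,j}=H_{i,j}/\sum_{k=1}^{n+1}H_{i,k}$. A fixed score function is a deterministic measurable $V:\mathbb R^p\times\mathbb R\to[0,\infty)$ not depending on the data; $V_i=V(Z_i)$. $\hat{\mathcal F}=\sum_{j=1}^{n}p^H_{n+1,j}\delta_{V_j}+p^H_{n+1,n+1}\delta_{\infty}$; $\delta_v$ is the point mass at $v$. For a probability distribution $\mathcal F$ on $\mathbb R\cup\{\infty\}$ and $a\in[0,1]$, $Q(a;\mathcal F)=\inf\{t:\mathbb P_{T\sim\mathcal F}(T\le t)\ge a\}$. *)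

theory Defs
  imports "HOL-Probability.Probability"
begin

text \<open>Quantile of a finitely supported distribution on the extended reals:
  the distribution puts mass p j at the point v j for j in I.
  Q(a; F) = inf { t : P_{T ~ F}(T <= t) >= a }.\<close>
definition Qf :: "real \<Rightarrow> 'i set \<Rightarrow> ('i \<Rightarrow> real) \<Rightarrow> ('i \<Rightarrow> ereal) \<Rightarrow> ereal" where
  "Qf a I p v = Inf {t. a \<le> (\<Sum>j\<in>{j\<in>I. v j \<le> t}. p j)}"

text \<open>Data are z : nat => (x, y), with Z_i = z i for i in {1..n+1}.\<close>

definition Xset :: "nat \<Rightarrow> (nat \<Rightarrow> 'x \<times> real) \<Rightarrow> 'x set" where
  "Xset n z = (\<lambda>i. fst (z i)) ` {1..n+1}"

definition Hm :: "('x \<Rightarrow> 'x \<Rightarrow> 'x set \<Rightarrow> real) \<Rightarrow> nat \<Rightarrow> (nat \<Rightarrow> 'x \<times> real) \<Rightarrow> nat \<Rightarrow> nat \<Rightarrow> real" where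
  "Hm H n z i j = H (fst (z i)) (fst (z j)) (Xset n z)"

definition pH :: "('x \<Rightarrow> 'x \<Rightarrow> 'x set \<Rightarrow> real) \<Rightarrow> nat \<Rightarrow> (nat \<Rightarrow> 'x \<times> real) \<Rightarrow> nat \<Rightarrow> nat \<Rightarrow> real" where
  "pH H n z i j = Hm H n z i j / (\<Sum>k\<in>{1..n+1}. Hm H n z i k)"

definition Vs :: "('x \<Rightarrow> real \<Rightarrow> real) \<Rightarrow> (nat \<Rightarrow> 'x \<times> real) \<Rightarrow> nat \<Rightarrow> real" where
  "Vs V z j = V (fst (z j)) (snd (z j))"

definition Qloc :: "('x \<Rightarrow> 'x \<Rightarrow> 'x set \<Rightarrow> real) \<Rightarrow> ('x \<Rightarrow> real \<Rightarrow> real) \<Rightarrow> nat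
    \<Rightarrow> (nat \<Rightarrow> 'x \<times> real) \<Rightarrow> real \<Rightarrow> nat \<Rightarrow> ereal \<Rightarrow> ereal" where
  "Qloc H V n z a i c = Qf a {1..n+1} (pH H n z i)
      (\<lambda>j. if j = n+1 then c else ereal (Vs V z j))"

text \<open>Q(a; hat F), hat F = sum_{j<=n} p^H_{n+1,j} delta_{V_j} + p^H_{n+1,n+1} delta_infinity.\<close>
definition Qhat :: "('x \<Rightarrow> 'x \<Rightarrow> 'x set \<Rightarrow> real) \<Rightarrow> ('x \<Rightarrow> real \<Rightarrow> real) \<Rightarrow> nat
    \<Rightarrow> (nat \<Rightarrow> 'x \<times> real) \<Rightarrow> real \<Rightarrow> ereal" where
  "Qhat H V n z a = Qloc H V n z a (n+1) \<infinity>"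

definition wt :: "('x \<Rightarrow> real) \<Rightarrow> nat \<Rightarrow> (nat \<Rightarrow> 'x \<times> real) \<Rightarrow> nat \<Rightarrow> real" where
  "wt w n z i = w (fst (z i)) / (\<Sum>j\<in>{1..n+1}. w (fst (z j)))"

definition G2w :: "('x \<Rightarrow> 'x \<Rightarrow> 'x set \<Rightarrow> real) \<Rightarrow> ('x \<Rightarrow> real \<Rightarrow> real) \<Rightarrow> ('x \<Rightarrow> real)
    \<Rightarrow> nat \<Rightarrow> real \<Rightarrow> (nat \<Rightarrow> 'x \<times> real) \<Rightarrow> real \<Rightarrow> bool" where
  "G2w H V w n \<alpha> z a =
     (let vbar = Qhat H V n z a in
      vbar = \<infinity> \<or>
      ((\<Sum>i\<in>{1..n}. wt w n z i * (if ereal (Vs V z i) \<le> Qloc H V n z a i vbar then 1 else 0)) \<ge> \<alpha>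
       \<and> (\<Sum>i\<in>{1..n}. wt w n z i * (if ereal (Vs V z i) \<le> Qloc H V n z a i 0 then 1 else 0))
           + wt w n z (n+1) \<ge> \<alpha>))"

definition Chat :: "('x \<Rightarrow> 'x \<Rightarrow> 'x set \<Rightarrow> real) \<Rightarrow> ('x \<Rightarrow> real \<Rightarrow> real) \<Rightarrow> nat
    \<Rightarrow> (nat \<Rightarrow> 'x \<times> real) \<Rightarrow> real \<Rightarrow> real set" where
  "Chat H V n z a = {y. ereal (V (fst (z (n+1))) y) \<le> Qhat H V n z a}"

end

theory Submission
  imports Defs
begin

(* Under covariate shift the law of the data is the product law P^(n+1) reweighted by
   w(X_(n+1)). Since P^(n+1) is invariant under the transposition tau_k of k and n+1, the
   probability of the coverage event E equals E[w(X_k) 1_E(Z o tau_k)] for every k, and averaging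
   over k reduces the claim to the deterministic inequality
     alpha * sum_k w(X_k) <= sum of w(X_k) over the k with Z o tau_k in E.
   For it, pick among the indices k whose swapped sample Z o tau_k is not covered the one with the
   smallest level alpha~(Z o tau_k). For that sample bar v* is finite, so the first half of (G2^w)
   applies: it bounds from below by alpha the weight of the indices j whose score lies below the
   localized quantile of all n+1 true scores at that level, and by monotonicity of quantiles in
   the level no uncovered index can be among them. *)

lemma Qf_permute:
  assumes "\<sigma> permutes I" "finite I"
  shows "Qf a I (p \<circ> \<sigma>) (v \<circ> \<sigma>) = Qf a I p v"
proof -
  have "(\<Sum>j\<in>{j\<in>I. v (\<sigma> j) \<le> t}. p (\<sigma> j)) = (\<Sum>j\<in>{j\<in>I. v j \<le> t}. p j)" for t
    using sum.permute[OF assms(1), of "\<lambda>j. if v j \<le> t then p j else 0"] assms(2)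
    by (simp add: sum.inter_filter o_def)
  then show ?thesis unfolding Qf_def by simp
qed

lemma Qf_mono_values:
  assumes "finite I" "\<And>j. j \<in> I \<Longrightarrow> v j \<le> v' j" "\<And>j. j \<in> I \<Longrightarrow> 0 \<le> p j"
  shows "Qf a I p v \<le> Qf a I p v'"
  unfolding Qf_def
proof (rule Inf_superset_mono, safe)
  fix t assume "a \<le> (\<Sum>j\<in>{j\<in>I. v' j \<le> t}. p j)"
  also have "\<dots> \<le> (\<Sum>j\<in>{j\<in>I. v j \<le> t}. p j)"
    by (rule sum_mono2) (use assms in \<open>auto intro: order_trans\<close>)
  finally show "a \<le> (\<Sum>j\<in>{j\<in>I. v j \<le> t}. p j)" .
qed

lemma Qf_mono_level: "a \<le> a' \<Longrightarrow> Qf a I p v \<le> Qf a' I p v"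
  unfolding Qf_def by (rule Inf_superset_mono) auto

lemma Xset_permute: "\<sigma> permutes {1..n+1} \<Longrightarrow> Xset n (z \<circ> \<sigma>) = Xset n z"
  unfolding Xset_def by (simp add: image_image[of "\<lambda>i. fst (z i)" \<sigma>, symmetric] permutes_image)

lemma pH_permute:
  assumes "\<sigma> permutes {1..n+1}"
  shows "pH H n (z \<circ> \<sigma>) i j = pH H n z (\<sigma> i) (\<sigma> j)"
proof -
  have "Hm H n (z \<circ> \<sigma>) i = Hm H n z (\<sigma> i) \<circ> \<sigma>"
    by (simp add: fun_eq_iff Hm_def Xset_permute[OF assms])
  then show ?thesis
    unfolding pH_def using sum.permute[OF assms, of "Hm H n z (\<sigma> i)"] by simp
qed

lemma wt_permute:
  assumes "\<sigma> permutes {1..n+1}"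
  shows "wt w n (z \<circ> \<sigma>) i = wt w n z (\<sigma> i)"
  using sum.permute[OF assms, of "\<lambda>j. w (fst (z j))"] by (simp add: wt_def o_def)

lemma Qloc_permute:
  assumes "\<sigma> permutes {1..n+1}"
  shows "Qloc H V n (z \<circ> \<sigma>) a i c
       = Qf a {1..n+1} (pH H n z (\<sigma> i)) (\<lambda>j. if j = \<sigma> (n+1) then c else ereal (Vs V z j))"
proof -
  have "pH H n (z \<circ> \<sigma>) i = pH H n z (\<sigma> i) \<circ> \<sigma>"
    by (simp add: fun_eq_iff pH_permute[OF assms])
  moreover have "(\<lambda>j. if j = n+1 then c else ereal (Vs V (z \<circ> \<sigma>) j))
      = (\<lambda>j. if j = \<sigma> (n+1) then c else ereal (Vs V z j)) \<circ> \<sigma>"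
    using permutes_inj[OF assms] by (auto simp: fun_eq_iff Vs_def inj_eq)
  ultimately show ?thesis
    unfolding Qloc_def using Qf_permute[OF assms] by simp
qed

lemma pH_nonneg: "(\<And>x1 x2 X. 0 \<le> H x1 x2 X) \<Longrightarrow> 0 \<le> pH H n z i j"
  unfolding pH_def Hm_def by (simp add: sum_nonneg)

definition Qfull :: "('x \<Rightarrow> 'x \<Rightarrow> 'x set \<Rightarrow> real) \<Rightarrow> ('x \<Rightarrow> real \<Rightarrow> real) \<Rightarrow> nat
    \<Rightarrow> (nat \<Rightarrow> 'x \<times> real) \<Rightarrow> real \<Rightarrow> nat \<Rightarrow> ereal" where
  "Qfull H V n z a i = Qf a {1..n+1} (pH H n z i) (\<lambda>j. ereal (Vs V z j))"

lemma Qf_update_le_Qfull: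
  assumes "\<And>x1 x2 X. 0 \<le> H x1 x2 X" "c \<le> ereal (Vs V z k)"
  shows "Qf a {1..n+1} (pH H n z i) (\<lambda>j. if j = k then c else ereal (Vs V z j)) \<le> Qfull H V n z a i"
  unfolding Qfull_def by (rule Qf_mono_values) (use assms pH_nonneg[OF assms(1)] in auto)

lemma Qfull_le_Qf_update:
  assumes "\<And>x1 x2 X. 0 \<le> H x1 x2 X" "ereal (Vs V z k) \<le> c"
  shows "Qfull H V n z a i \<le> Qf a {1..n+1} (pH H n z i) (\<lambda>j. if j = k then c else ereal (Vs V z j))"
  unfolding Qfull_def by (rule Qf_mono_values) (use assms pH_nonneg[OF assms(1)] in auto)

lemma Qfull_mono_level: "a \<le> a' \<Longrightarrow> Qfull H V n z a i \<le> Qfull H V n z a' i"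
  unfolding Qfull_def by (rule Qf_mono_level)

lemma transpose_last_permutes:
  fixes n :: nat
  shows "k \<in> {1..n+1} \<Longrightarrow> Transposition.transpose k (n+1) permutes {1..n+1}"
  by (rule permutes_swap_id) auto

lemma Qhat_transpose:
  assumes "k \<in> {1..n+1}"
  shows "Qhat H V n (z \<circ> Transposition.transpose k (n+1)) a
       = Qf a {1..n+1} (pH H n z k) (\<lambda>j. if j = k then \<infinity> else ereal (Vs V z j))"
  unfolding Qhat_def Qloc_permute[OF transpose_last_permutes[OF assms]] by simp

lemma Qfull_lt_score_if_miss:
  assumes "\<And>x1 x2 X. 0 \<le> H x1 x2 X" "k \<in> {1..n+1}"
    and "Qhat H V n (z \<circ> Transposition.transpose k (n+1)) a < ereal (Vs V z k)"
  shows "Qfull H V n z a k < ereal (Vs V z k)"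
proof -
  have "Qfull H V n z a k \<le> Qhat H V n (z \<circ> Transposition.transpose k (n+1)) a"
    unfolding Qhat_transpose[OF assms(2)] by (rule Qfull_le_Qf_update[OF assms(1)]) simp
  then show ?thesis using assms(3) by (rule le_less_trans)
qed

lemma wt_nonneg: "(\<And>x. 0 \<le> w x) \<Longrightarrow> 0 \<le> wt w n z i"
  unfolding wt_def by (simp add: sum_nonneg)

lemma weight_le_of_le_wt_sum:
  assumes w_nonneg: "\<And>x. 0 \<le> w x" and C: "C \<subseteq> {1..n+1}"
    and "\<alpha> \<le> (\<Sum>j\<in>C. wt w n z j)"
  shows "\<alpha> * (\<Sum>j\<in>{1..n+1}. w (fst (z j))) \<le> (\<Sum>j\<in>C. w (fst (z j)))"
proof -
  define S where "S = (\<Sum>j\<in>{1..n+1}. w (fst (z j)))"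
  have "(\<Sum>j\<in>C. wt w n z j) = (\<Sum>j\<in>C. w (fst (z j))) / S"
    by (simp add: wt_def S_def sum_divide_distrib)
  moreover have "0 \<le> S" "0 \<le> (\<Sum>j\<in>C. w (fst (z j)))"
    unfolding S_def by (simp_all add: sum_nonneg w_nonneg)
  ultimately show ?thesis
    using assms(3) unfolding S_def[symmetric]
    (* if all weights vanish, wt is 0 because x / 0 = 0, and both sides are 0 *)
    by (cases "S = 0") (simp_all add: pos_le_divide_eq)
qed

lemma coverage_weight_ge_if_miss:
  fixes z :: "nat \<Rightarrow> 'x \<times> real"
  assumes H_nonneg: "\<And>x1 x2 X. 0 \<le> H x1 x2 X" and w_nonneg: "\<And>x. 0 \<le> w x"
    and k: "k \<in> {1..n+1}"
    and G: "G2w H V w n \<alpha> (z \<circ> Transposition.transpose k (n+1)) a"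
    and miss: "Qhat H V n (z \<circ> Transposition.transpose k (n+1)) a < ereal (Vs V z k)"
  shows "\<alpha> * (\<Sum>j\<in>{1..n+1}. w (fst (z j)))
       \<le> (\<Sum>j\<in>{j\<in>{1..n+1}. ereal (Vs V z j) \<le> Qfull H V n z a j}. w (fst (z j)))"
proof -
  define \<tau> where "\<tau> = Transposition.transpose k (n+1)"
  have \<tau>: "\<tau> permutes {1..n+1}" unfolding \<tau>_def by (rule transpose_last_permutes[OF k])
  define vbar where "vbar = Qhat H V n (z \<circ> \<tau>) a"
  define C where "C = {j\<in>{1..n+1}. ereal (Vs V z j) \<le> Qfull H V n z a j}"
  have C_sub: "C \<subseteq> {1..n+1}" unfolding C_def by blast
  (* replacing V_k by the smaller vbar can only lower the localized quantiles *)
  have vbar_le: "vbar \<le> ereal (Vs V z k)" using miss unfolding vbar_def \<tau>_def by simp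
  have hit_in_C: "\<tau> i \<in> C" if "i \<in> {1..n}" "ereal (Vs V (z \<circ> \<tau>) i) \<le> Qloc H V n (z \<circ> \<tau>) a i vbar" for i
  proof -
    have "Qloc H V n (z \<circ> \<tau>) a i vbar \<le> Qfull H V n z a (\<tau> i)"
      unfolding Qloc_permute[OF \<tau>] by (rule Qf_update_le_Qfull[OF H_nonneg]) (simp add: \<tau>_def vbar_le)
    moreover have "\<tau> i \<in> {1..n+1}" using permutes_in_image[OF \<tau>] that(1) by simp
    ultimately show ?thesis using that(2) by (simp add: C_def Vs_def)
  qed
  have "vbar \<noteq> \<infinity>" using miss unfolding vbar_def \<tau>_def by auto
  then have "\<alpha> \<le> (\<Sum>i\<in>{1..n}. wt w n (z \<circ> \<tau>) i
      * (if ereal (Vs V (z \<circ> \<tau>) i) \<le> Qloc H V n (z \<circ> \<tau>) a i vbar then 1 else 0))"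
    using G unfolding G2w_def Let_def vbar_def \<tau>_def by auto
  also have "\<dots> \<le> (\<Sum>i\<in>{1..n}. (if \<tau> i \<in> C then wt w n z (\<tau> i) else 0))"
    by (rule sum_mono) (auto simp: wt_permute[OF \<tau>] wt_nonneg[OF w_nonneg] hit_in_C)
  also have "\<dots> \<le> (\<Sum>i\<in>{1..n+1}. (if \<tau> i \<in> C then wt w n z (\<tau> i) else 0))"
    by (rule sum_mono2) (auto simp: wt_nonneg[OF w_nonneg])
  also have "\<dots> = (\<Sum>j\<in>{1..n+1}. if j \<in> C then wt w n z j else 0)"
    using sum.permute[OF \<tau>, of "\<lambda>j. if j \<in> C then wt w n z j else 0"] by (simp add: o_def)
  also have "\<dots> = (\<Sum>j\<in>C. wt w n z j)"
    using C_sub by (simp only: sum.inter_restrict[symmetric, OF finite_atLeastAtMost] Int_absorb1)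
  finally show ?thesis
    unfolding C_def by (rule weight_le_of_le_wt_sum[OF w_nonneg, rotated]) auto
qed

lemma weight_of_covering_swaps_ge:
  fixes f :: "(nat \<Rightarrow> 'x \<times> real) \<Rightarrow> real"
  assumes H_nonneg: "\<And>x1 x2 X. 0 \<le> H x1 x2 X" and w_nonneg: "\<And>x. 0 \<le> w x"
    and G: "\<And>z. G2w H V w n \<alpha> z (f z)" and "\<alpha> \<le> 1"
  shows "\<alpha> * (\<Sum>k\<in>{1..n+1}. w (fst (z k)))
       \<le> (\<Sum>k\<in>{k\<in>{1..n+1}. ereal (Vs V z k) \<le> Qhat H V n (z \<circ> Transposition.transpose k (n+1))
                                  (f (z \<circ> Transposition.transpose k (n+1)))}. w (fst (z k)))"
proof -
  define a where "a k = f (z \<circ> Transposition.transpose k (n+1))" for k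
  define F where "F = {k\<in>{1..n+1}. Qhat H V n (z \<circ> Transposition.transpose k (n+1)) (a k) < ereal (Vs V z k)}"
  have covered: "{k\<in>{1..n+1}. ereal (Vs V z k) \<le> Qhat H V n (z \<circ> Transposition.transpose k (n+1)) (a k)}
      = {1..n+1} - F"
    unfolding F_def by (auto simp: not_less)
  have F_sub: "F \<subseteq> {1..n+1}" unfolding F_def by blast
  have "\<alpha> * (\<Sum>k\<in>{1..n+1}. w (fst (z k))) \<le> (\<Sum>k\<in>{1..n+1} - F. w (fst (z k)))"
  proof (cases "F = {}")
    case True
    then show ?thesis
      using mult_right_mono[OF \<open>\<alpha> \<le> 1\<close>, of "\<Sum>k\<in>{1..n+1}. w (fst (z k))"]
      by (simp add: sum_nonneg w_nonneg)
  next
    case False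
    have "finite F" using F_sub finite_subset by blast
    (* the uncovered index of smallest level; (G2^w) is only applied to its swapped sample *)
    define k0 where "k0 = arg_min_on a F"
    have k0: "k0 \<in> F" and k0_min: "\<And>k. k \<in> F \<Longrightarrow> a k0 \<le> a k"
      unfolding k0_def using arg_min_if_finite(1) arg_min_least[of F _ a] \<open>finite F\<close> False by auto
    define C where "C = {j\<in>{1..n+1}. ereal (Vs V z j) \<le> Qfull H V n z (a k0) j}"
    have "\<alpha> * (\<Sum>k\<in>{1..n+1}. w (fst (z k))) \<le> (\<Sum>j\<in>C. w (fst (z j)))"
      unfolding C_def using k0 unfolding F_def a_def
      by (intro coverage_weight_ge_if_miss[OF H_nonneg w_nonneg _ G]) auto
    also have "\<dots> \<le> (\<Sum>k\<in>{1..n+1} - F. w (fst (z k)))"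
    proof (rule sum_mono2)
      show "C \<subseteq> {1..n+1} - F"
      proof (intro subsetI DiffI notI)
        fix j assume "j \<in> C"
        then have "j \<in> {1..n+1}" and hit: "ereal (Vs V z j) \<le> Qfull H V n z (a k0) j"
          unfolding C_def by blast+
        then show "j \<in> {1..n+1}" by blast
        assume "j \<in> F"
        then have "Qfull H V n z (a j) j < ereal (Vs V z j)"
          unfolding F_def by (intro Qfull_lt_score_if_miss[OF H_nonneg]) auto
        moreover have "Qfull H V n z (a k0) j \<le> Qfull H V n z (a j) j"
          by (rule Qfull_mono_level[OF k0_min[OF \<open>j \<in> F\<close>]])
        ultimately show False using hit by simp
      qed
    qed (simp_all add: w_nonneg)
    finally show ?thesis .
  qed
  then show ?thesis unfolding covered[unfolded a_def] .
qed

lemma restrict_permute_PiM: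
  assumes "z \<in> space (PiM I M)" "\<sigma> permutes I"
  shows "(\<lambda>i\<in>I. z (\<sigma> i)) = z \<circ> \<sigma>"
  using assms by (auto simp: fun_eq_iff space_PiM PiE_def extensional_def permutes_not_in)

lemma measurable_restrict_permute:
  "\<sigma> permutes I \<Longrightarrow> (\<lambda>z. \<lambda>i\<in>I. z (\<sigma> i)) \<in> PiM I (\<lambda>_. P) \<rightarrow>\<^sub>M PiM I (\<lambda>_. P)"
  by (intro measurable_restrict measurable_component_singleton) (simp add: permutes_in_image)

lemma measurable_PiM_permute:
  assumes "\<sigma> permutes I"
  shows "(\<lambda>z. z \<circ> \<sigma>) \<in> PiM I (\<lambda>_. P) \<rightarrow>\<^sub>M PiM I (\<lambda>_. P)"
  using measurable_restrict_permute[OF assms]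
  by (rule measurable_cong[THEN iffD1, rotated]) (simp add: restrict_permute_PiM[OF _ assms])

lemma nn_integral_PiM_permute:
  assumes "prob_space P" "\<sigma> permutes I" "f \<in> borel_measurable (PiM I (\<lambda>_. P))"
  shows "(\<integral>\<^sup>+ z. f (z \<circ> \<sigma>) \<partial>PiM I (\<lambda>_. P)) = (\<integral>\<^sup>+ z. f z \<partial>PiM I (\<lambda>_. P))"
proof -
  let ?Q = "PiM I (\<lambda>_. P)" and ?t = "\<lambda>z. \<lambda>i\<in>I. z (\<sigma> i)"
  have t: "?t \<in> ?Q \<rightarrow>\<^sub>M ?Q" by (rule measurable_restrict_permute[OF assms(2)])
  have "distr ?Q ?Q ?t = ?Q"
    using distr_PiM_reindex[of I "\<lambda>_. P" \<sigma> I] assms(1,2)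
    by (simp add: permutes_inj_on permutes_in_image Pi_iff)
  then have "(\<integral>\<^sup>+ z. f z \<partial>?Q) = (\<integral>\<^sup>+ z. f (?t z) \<partial>?Q)"
    using nn_integral_distr[OF t, of f] assms(3) by simp
  also have "\<dots> = (\<integral>\<^sup>+ z. f (z \<circ> \<sigma>) \<partial>?Q)"
    by (rule nn_integral_cong) (simp add: restrict_permute_PiM[OF _ assms(2)])
  finally show ?thesis ..
qed

lemma prod_indicator_eq_indicator_PiE:
  assumes "finite I" "z \<in> extensional I"
  shows "(\<Prod>i\<in>I. indicator (A i) (z i) :: 'b::comm_semiring_1) = indicator (Pi\<^sub>E I A) z"
proof (cases "z \<in> Pi\<^sub>E I A")
  case False
  with assms(2) obtain i where "i \<in> I" "z i \<notin> A i" by (auto simp: PiE_def Pi_def)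
  then have "(\<Prod>i\<in>I. indicator (A i) (z i) :: 'b) = 0"
    using assms(1) by (intro prod_zero) (auto intro!: bexI[of _ i])
  with False show ?thesis by simp
qed (auto simp: PiE_def Pi_def)

lemma PiM_density_component:
  fixes g :: "'a \<Rightarrow> ennreal"
  assumes "finite I" "m \<in> I" "prob_space P" "prob_space (density P g)" "g \<in> borel_measurable P"
  shows "PiM I (\<lambda>i. if i = m then density P g else P) = density (PiM I (\<lambda>_. P)) (\<lambda>z. g (z m))"
proof -
  interpret P: prob_space P by fact
  interpret Pg: prob_space "density P g" by fact
  interpret PP: product_sigma_finite "\<lambda>_. P" by standard
  let ?M = "\<lambda>i. if i = m then density P g else P" and ?Q = "PiM I (\<lambda>_. P)"
  interpret PM: product_sigma_finite ?M
    unfolding product_sigma_finite_def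
    by (auto intro: P.sigma_finite_measure_axioms Pg.sigma_finite_measure_axioms)
  have gm: "(\<lambda>z. g (z m)) \<in> borel_measurable ?Q"
    using assms(2,5) by measurable
  show ?thesis
  proof (rule PM.PiM_eqI[symmetric])
    show "sets (density ?Q (\<lambda>z. g (z m))) = sets (PiM I ?M)"
      by (simp, rule sets_PiM_cong) auto
  next
    fix A assume A: "\<And>i. i \<in> I \<Longrightarrow> A i \<in> sets (?M i)"
    then have AP: "\<And>i. i \<in> I \<Longrightarrow> A i \<in> sets P" by (metis sets_density)
    define h where "h i x = (if i = m then g x else 1) * indicator (A i) x" for i x
    have "emeasure (density ?Q (\<lambda>z. g (z m))) (Pi\<^sub>E I A) = (\<integral>\<^sup>+ z. g (z m) * indicator (Pi\<^sub>E I A) z \<partial>?Q)"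
      using AP assms(1) by (intro emeasure_density[OF gm] sets_PiM_I_finite) auto
    also have "\<dots> = (\<integral>\<^sup>+ z. (\<Prod>i\<in>I. h i (z i)) \<partial>?Q)"
    proof (rule nn_integral_cong)
      fix z assume "z \<in> space ?Q"
      have "(\<Prod>i\<in>I. h i (z i)) = (\<Prod>i\<in>I. if i = m then g (z i) else 1) * (\<Prod>i\<in>I. indicator (A i) (z i))"
        unfolding h_def by (rule prod.distrib)
      also have "\<dots> = g (z m) * indicator (Pi\<^sub>E I A) z"
        using \<open>z \<in> space ?Q\<close> assms(1,2)
        by (simp add: prod.delta space_PiM PiE_def prod_indicator_eq_indicator_PiE)
      finally show "g (z m) * indicator (Pi\<^sub>E I A) z = (\<Prod>i\<in>I. h i (z i))" ..
    qed
    also have "\<dots> = (\<Prod>i\<in>I. integral\<^sup>N P (h i))"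
      using AP assms(2,5) unfolding h_def by (intro PP.product_nn_integral_prod assms(1)) auto
    also have "\<dots> = (\<Prod>i\<in>I. emeasure (?M i) (A i))"
    proof (rule prod.cong)
      fix i assume "i \<in> I"
      then have "A i \<in> sets P" by (rule AP)
      then show "integral\<^sup>N P (h i) = emeasure (?M i) (A i)"
        using assms(5) by (cases "i = m") (simp_all add: h_def[abs_def] emeasure_density)
    qed simp
    finally show "emeasure (density ?Q (\<lambda>z. g (z m))) (Pi\<^sub>E I A) = (\<Prod>i\<in>I. emeasure (?M i) (A i))" .
  qed (fact assms(1))
qed

lemma emeasure_PiM_density_component_transpose:
  fixes g :: "'a \<Rightarrow> ennreal"
  assumes "finite I" "m \<in> I" "k \<in> I" "prob_space P" "prob_space (density P g)" "g \<in> borel_measurable P"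
    and E: "E \<in> sets (PiM I (\<lambda>i. if i = m then density P g else P))"
  shows "emeasure (PiM I (\<lambda>i. if i = m then density P g else P)) E
       = (\<integral>\<^sup>+ z. g (z k) * indicator E (z \<circ> Transposition.transpose k m) \<partial>PiM I (\<lambda>_. P))"
proof -
  let ?Q = "PiM I (\<lambda>_. P)" and ?\<tau> = "Transposition.transpose k m"
  have M: "PiM I (\<lambda>i. if i = m then density P g else P) = density ?Q (\<lambda>z. g (z m))"
    using PiM_density_component assms(1,2,4-6) .
  have "E \<in> sets ?Q" using E unfolding M by simp
  have g_m: "(\<lambda>z. g (z m)) \<in> borel_measurable ?Q"
    by (rule measurable_compose[OF measurable_component_singleton[OF assms(2)] assms(6)])
  then have f: "(\<lambda>z. g (z m) * indicator E z) \<in> borel_measurable ?Q"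
    using \<open>E \<in> sets ?Q\<close> by measurable
  have "emeasure (PiM I (\<lambda>i. if i = m then density P g else P)) E = (\<integral>\<^sup>+ z. g (z m) * indicator E z \<partial>?Q)"
    unfolding M using g_m \<open>E \<in> sets ?Q\<close> by (rule emeasure_density)
  also have "\<dots> = (\<integral>\<^sup>+ z. g ((z \<circ> ?\<tau>) m) * indicator E (z \<circ> ?\<tau>) \<partial>?Q)"
    using nn_integral_PiM_permute[OF assms(4) permutes_swap_id[OF assms(3,2)] f] by simp
  finally show ?thesis by simp
qed

lemma measure_ge_of_weighted_transpositions:
  fixes I :: "'i set" and m :: 'i and P :: "'a measure" and g :: "'a \<Rightarrow> real"
  defines "M \<equiv> PiM I (\<lambda>i. if i = m then density P (\<lambda>x. ennreal (g x)) else P)"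
  assumes I: "finite I" "m \<in> I" and P: "prob_space P" "prob_space (density P (\<lambda>x. ennreal (g x)))"
    and g: "g \<in> borel_measurable P" "\<And>x. 0 \<le> g x" and "0 \<le> \<alpha>" and E: "E \<in> sets M"
    and bound: "\<And>z. z \<in> space (PiM I (\<lambda>_. P)) \<Longrightarrow>
      \<alpha> * (\<Sum>k\<in>I. g (z k)) \<le> (\<Sum>k\<in>{k\<in>I. z \<circ> Transposition.transpose k m \<in> E}. g (z k))"
  shows "\<alpha> \<le> measure M E"
proof -
  let ?Q = "PiM I (\<lambda>_. P)" and ?\<tau> = "\<lambda>k. Transposition.transpose k m"
  interpret M: prob_space M
    unfolding M_def using P by (intro prob_space_PiM) auto
  have swap: "emeasure M E' = (\<integral>\<^sup>+ z. ennreal (g (z k)) * indicator E' (z \<circ> ?\<tau> k) \<partial>?Q)"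
    if "k \<in> I" "E' \<in> sets M" for k E'
    using that I P g(1) unfolding M_def by (intro emeasure_PiM_density_component_transpose) auto
  have sets_M: "sets M = sets ?Q" unfolding M_def by (rule sets_PiM_cong) auto
  have "E \<in> sets ?Q" using E sets_M by simp
  have transposed_in_space: "z \<circ> ?\<tau> k \<in> space M" if "z \<in> space ?Q" "k \<in> I" for z k
  proof -
    have "z \<circ> ?\<tau> k \<in> space ?Q"
      by (rule measurable_space[OF measurable_PiM_permute[OF permutes_swap_id[OF that(2) I(2)]] that(1)])
    then show ?thesis using sets_eq_imp_space_eq[OF sets_M] by simp
  qed
  have weight_k: "(\<lambda>z. ennreal (g (z k))) \<in> borel_measurable ?Q" if "k \<in> I" for k
    using measurable_compose[OF measurable_component_singleton[OF that] g(1)] by simp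
  have transposed_E: "(\<lambda>z. ennreal (g (z k)) * indicator E (z \<circ> ?\<tau> k)) \<in> borel_measurable ?Q"
    if "k \<in> I" for k
  proof -
    have "(\<lambda>z. indicator E (z \<circ> ?\<tau> k) :: ennreal) \<in> borel_measurable ?Q"
      by (rule measurable_compose[OF measurable_PiM_permute[OF permutes_swap_id[OF that I(2)]]
            borel_measurable_indicator[OF \<open>E \<in> sets ?Q\<close>]])
    then show ?thesis using weight_k[OF that] by simp
  qed
  have one: "(\<integral>\<^sup>+ z. ennreal (g (z k)) \<partial>?Q) = 1" if "k \<in> I" for k
  proof -
    have "(\<integral>\<^sup>+ z. ennreal (g (z k)) \<partial>?Q) = emeasure M (space M)"
      using swap[OF that sets.top] transposed_in_space[OF _ that] by (auto intro: nn_integral_cong)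
    then show ?thesis using M.emeasure_space_1 by simp
  qed
  have "ennreal (card I * \<alpha>) = (\<Sum>k\<in>I. ennreal \<alpha> * (\<integral>\<^sup>+ z. ennreal (g (z k)) \<partial>?Q))"
    using \<open>0 \<le> \<alpha>\<close> by (simp add: one ennreal_mult ennreal_of_nat_eq_real_of_nat)
  also have "\<dots> = (\<Sum>k\<in>I. \<integral>\<^sup>+ z. ennreal \<alpha> * ennreal (g (z k)) \<partial>?Q)"
    by (intro sum.cong refl nn_integral_cmult[symmetric] weight_k)
  also have "\<dots> = (\<integral>\<^sup>+ z. (\<Sum>k\<in>I. ennreal \<alpha> * ennreal (g (z k))) \<partial>?Q)"
    using weight_k by (intro nn_integral_sum[symmetric]) auto
  also have "\<dots> = (\<integral>\<^sup>+ z. ennreal (\<alpha> * (\<Sum>k\<in>I. g (z k))) \<partial>?Q)"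
    using \<open>0 \<le> \<alpha>\<close> g(2)
    by (simp add: sum_distrib_left ennreal_mult'[symmetric] sum_ennreal)
  also have "\<dots> \<le> (\<integral>\<^sup>+ z. ennreal (\<Sum>k\<in>{k\<in>I. z \<circ> ?\<tau> k \<in> E}. g (z k)) \<partial>?Q)"
    using bound by (intro nn_integral_mono ennreal_leI) auto
  also have "\<dots> = (\<integral>\<^sup>+ z. (\<Sum>k\<in>I. ennreal (g (z k)) * indicator E (z \<circ> ?\<tau> k)) \<partial>?Q)"
  proof (rule nn_integral_cong)
    fix z
    have "(\<Sum>k\<in>{k\<in>I. z \<circ> ?\<tau> k \<in> E}. ennreal (g (z k))) = (\<Sum>k\<in>I. ennreal (g (z k)) * indicator E (z \<circ> ?\<tau> k))"
      using I(1) by (simp add: sum.inter_filter[symmetric])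
    then show "ennreal (\<Sum>k\<in>{k\<in>I. z \<circ> ?\<tau> k \<in> E}. g (z k)) = (\<Sum>k\<in>I. ennreal (g (z k)) * indicator E (z \<circ> ?\<tau> k))"
      using g(2) by (simp add: sum_ennreal)
  qed
  also have "\<dots> = (\<Sum>k\<in>I. \<integral>\<^sup>+ z. ennreal (g (z k)) * indicator E (z \<circ> ?\<tau> k) \<partial>?Q)"
    using transposed_E by (intro nn_integral_sum) auto
  also have "\<dots> = (\<Sum>k\<in>I. emeasure M E)"
    using swap E by (intro sum.cong) auto
  also have "\<dots> = ennreal (card I * measure M E)"
    by (simp add: M.emeasure_eq_measure ennreal_of_nat_eq_real_of_nat ennreal_mult)
  finally have "card I * \<alpha> \<le> card I * measure M E"
    by (simp add: ennreal_le_iff)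
  moreover have "0 < card I" using I by (auto simp: card_gt_0_iff)
  ultimately show ?thesis by simp
qed

theorem theorem7:
  fixes n :: nat
    and P Pt :: "((real ^ 'p) \<times> real) measure"
    and w :: "real ^ 'p \<Rightarrow> real"
    and H :: "real ^ 'p \<Rightarrow> real ^ 'p \<Rightarrow> (real ^ 'p) set \<Rightarrow> real"
    and V :: "real ^ 'p \<Rightarrow> real \<Rightarrow> real"
    and A :: "(nat \<Rightarrow> (real ^ 'p) \<times> real) \<Rightarrow> real ^ 'p \<Rightarrow> real"
    and \<alpha> :: real
  defines "M \<equiv> PiM {1..n+1} (\<lambda>i. if i = n+1 then Pt else P)"
    and "\<alpha>t \<equiv> (\<lambda>z. A (restrict z {1..n}) (fst (z (n+1))))"
  assumes P_prob: "prob_space P"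
    and P_sets: "sets P = sets borel"
    and w_meas: "w \<in> borel_measurable borel"
    and w_nonneg: "\<And>x. w x \<ge> 0"
    and covshift: "Pt = density P (\<lambda>z. ennreal (w (fst z)))"
    and Pt_prob: "prob_space Pt"
    and H_range: "\<And>x1 x2 X. 0 \<le> H x1 x2 X \<and> H x1 x2 X \<le> 1"
    and H_diag: "\<And>x X. H x x X = 1"
    and V_meas: "(\<lambda>z. V (fst z) (snd z)) \<in> borel_measurable borel"
    and V_nonneg: "\<And>x y. V x y \<ge> 0"
    and alpha: "0 < \<alpha>" "\<alpha> < 1"
    and A_range: "\<And>z x. 0 \<le> A z x \<and> A z x \<le> 1"
    and A_perm: "\<And>\<sigma> z x. \<sigma> permutes {1..n} \<Longrightarrow> A (z \<circ> \<sigma>) x = A z x"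
    and A_G2w: "\<And>z. G2w H V w n \<alpha> z (\<alpha>t z)"
    and event_meas: "{z \<in> space M. ereal (V (fst (z (n+1))) (snd (z (n+1)))) \<le> Qhat H V n z (\<alpha>t z)} \<in> sets M"
  shows "\<alpha> \<le> measure M {z \<in> space M. ereal (V (fst (z (n+1))) (snd (z (n+1)))) \<le> Qhat H V n z (\<alpha>t z)}
       \<and> \<alpha> \<le> measure M {z \<in> space M. snd (z (n+1)) \<in> Chat H V n z (\<alpha>t z)}"
proof -
  let ?I = "{1..n+1}" and ?Q = "PiM {1..n+1} (\<lambda>_. P)" and ?\<tau> = "\<lambda>k. Transposition.transpose k (n+1)"
  define E where "E = {z \<in> space M. ereal (V (fst (z (n+1))) (snd (z (n+1)))) \<le> Qhat H V n z (\<alpha>t z)}"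
  have "(\<lambda>x::(real ^ 'p) \<times> real. w (fst x)) \<in> borel_measurable borel"
    unfolding borel_prod[symmetric] using w_meas by measurable
  then have w_fst: "(\<lambda>x. w (fst x)) \<in> borel_measurable P"
    using measurable_cong_sets[OF P_sets refl] by blast
  have space_M: "space M = space ?Q"
    unfolding M_def space_PiM by (rule PiE_cong) (simp add: covshift)
  have covering: "\<alpha> * (\<Sum>k\<in>?I. w (fst (z k))) \<le> (\<Sum>k\<in>{k\<in>?I. z \<circ> ?\<tau> k \<in> E}. w (fst (z k)))"
    if "z \<in> space ?Q" for z
  proof -
    have "z \<circ> ?\<tau> k \<in> space M" if "k \<in> ?I" for k
      using measurable_space[OF measurable_PiM_permute[OF transpose_last_permutes[OF that]] \<open>z \<in> space ?Q\<close>]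
      unfolding space_M .
    then have "{k\<in>?I. z \<circ> ?\<tau> k \<in> E}
        = {k\<in>?I. ereal (Vs V z k) \<le> Qhat H V n (z \<circ> ?\<tau> k) (\<alpha>t (z \<circ> ?\<tau> k))}"
      unfolding E_def by (auto simp: Vs_def)
    then show ?thesis
      using weight_of_covering_swaps_ge[of H w V n \<alpha> \<alpha>t z] H_range w_nonneg A_G2w alpha by auto
  qed
  have M_density: "M = PiM ?I (\<lambda>i. if i = n+1 then density P (\<lambda>x. ennreal (w (fst x))) else P)"
    unfolding M_def covshift ..
  have "E \<in> sets M" using event_meas unfolding E_def .
  then have "\<alpha> \<le> measure M E"
    unfolding M_density
    by (intro measure_ge_of_weighted_transpositions[where g = "\<lambda>x. w (fst x)"])
      (use P_prob Pt_prob w_fst w_nonneg alpha covering in \<open>auto simp: covshift\<close>)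
  moreover have "{z \<in> space M. snd (z (n+1)) \<in> Chat H V n z (\<alpha>t z)} = E"
    unfolding E_def Chat_def by simp
  ultimately show ?thesis unfolding E_def by simp
qed

end
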